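(* Every (non-degenerate) parallelogram $\Omega\subset\mathbb{R}^2$ satisfies $P(\Omega)\,w(\Omega)\le 4|\Omega|$. Consequently every parallelogram satisfies $P(\Omega)^2\mu_1(\Omega)\le16\pi^2$.
   Context: $P(\Omega)$ is the perimeter, $|\Omega|$ the area, $w(\Omega)=\min_{\nu\in\mathbb S^1}\mathcal H^1(p_\nu(\Omega))$ the minimal width ($p_\nu$ the orthogonal projection onto $\mathbb{R}\nu$), and $\mu_1(\Omega)=\min_{u\in H^1(\Omega),\int_\Omega u=0}\int_\Omega|\nabla u|^2/\int_\Omega u^2$ the first non-trivial Neumann eigenvalue of the Laplacian. *)

theory Defs
  imports "HOL-Analysis.Analysis"
begin

definition is_parallelogram :: "(real^2) set \<Rightarrow> bool" where
  "is_parallelogram \<Omega> \<longleftrightarrow>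
     (\<exists>p a b. a$1 * b$2 - a$2 * b$1 \<noteq> 0 \<and>
        \<Omega> = {p + s *\<^sub>R a + t *\<^sub>R b | s t. 0 < s \<and> s < 1 \<and> 0 < t \<and> t < 1})"

definition area :: "(real^2) set \<Rightarrow> real" where
  "area \<Omega> = measure lebesgue \<Omega>"

definition min_width :: "(real^2) set \<Rightarrow> real" where
  "min_width \<Omega> = (INF \<nu>\<in>{\<nu>::real^2. norm \<nu> = 1}. measure lebesgue {x \<bullet> \<nu> | x. x \<in> \<Omega>})"

definition C1c_on :: "(real^2) set \<Rightarrow> (real^2 \<Rightarrow> 'b::real_normed_vector)
     \<Rightarrow> (real^2 \<Rightarrow> real^2 \<Rightarrow> 'b) \<Rightarrow> bool" where
  "C1c_on U f D \<longleftrightarrow>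
     (\<forall>x. (f has_derivative D x) (at x)) \<and>
     (\<forall>v. continuous_on UNIV (\<lambda>x. D x v)) \<and>
     (\<exists>K. compact K \<and> K \<subseteq> U \<and> (\<forall>x. x \<notin> K \<longrightarrow> f x = 0))"

text \<open>De Giorgi perimeter: total variation of the indicator function of \<Omega>.\<close>
definition perimeter :: "(real^2) set \<Rightarrow> real" where
  "perimeter \<Omega> = Sup {(LINT x:\<Omega>|lebesgue. (\<Sum>b\<in>Basis. D x b \<bullet> b)) | \<phi> D.
      C1c_on UNIV \<phi> D \<and> (\<forall>x. norm (\<phi> x) \<le> 1)}"

definition weak_gradient_H1 :: "(real^2) set \<Rightarrow> (real^2 \<Rightarrow> real) \<Rightarrow> (real^2 \<Rightarrow> real^2) \<Rightarrow> bool" where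
  "weak_gradient_H1 \<Omega> u g \<longleftrightarrow>
     set_borel_measurable lebesgue \<Omega> u \<and>
     set_integrable lebesgue \<Omega> (\<lambda>x. (u x)\<^sup>2) \<and>
     set_borel_measurable lebesgue \<Omega> g \<and>
     set_integrable lebesgue \<Omega> (\<lambda>x. (norm (g x))\<^sup>2) \<and>
     (\<forall>\<phi> D. C1c_on \<Omega> \<phi> D \<longrightarrow>
        (\<forall>b\<in>Basis. (LINT x:\<Omega>|lebesgue. u x * D x b) = - (LINT x:\<Omega>|lebesgue. (g x \<bullet> b) * \<phi> x)))"

definition H1 :: "(real^2) set \<Rightarrow> (real^2 \<Rightarrow> real) set" where
  "H1 \<Omega> = {u. \<exists>g. weak_gradient_H1 \<Omega> u g}"

text \<open>First non-trivial Neumann eigenvalue via the Rayleigh quotient.\<close>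
definition mu1 :: "(real^2) set \<Rightarrow> real" where
  "mu1 \<Omega> = Inf {(LINT x:\<Omega>|lebesgue. (norm (g x))\<^sup>2) / (LINT x:\<Omega>|lebesgue. (u x)\<^sup>2) | u g.
      weak_gradient_H1 \<Omega> u g \<and> (LINT x:\<Omega>|lebesgue. u x) = 0 \<and>
      (LINT x:\<Omega>|lebesgue. (u x)\<^sup>2) \<noteq> 0}"

end

theory Submission
  imports Defs
begin

(*
  Write \<Omega> = p + (0,1) a + (0,1) b. For the eigenvalue let |a| \<le> |b|, k = |b| / |a| and g = |cos \<angle>(a, b)|.
  In the affine coordinates s, t of \<Omega> the test functions cos (\<pi> t), cos (\<pi> s) \<plusminus> cos (\<pi> t)
  and a linear function bound m = \<mu>1 |a|^2, and an elementary case analysis in (k, g) shows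
  that one of the three bounds always gives (1 + k)^2 m \<le> 4 \<pi>^2, i.e. P^2 \<mu>1 \<le> 16 \<pi>^2.
*)

section \<open>Vectors in the plane\<close>

abbreviation cross2 :: "real^2 \<Rightarrow> real^2 \<Rightarrow> real" where
  "cross2 u v \<equiv> u$1 * v$2 - u$2 * v$1"

definition perp :: "real^2 \<Rightarrow> real^2" where
  "perp v = vector [v$2, - v$1]"

lemma inner_vec2: "u \<bullet> v = u$1 * v$1 + u$2 * (v$2 :: real)"
  for u v :: "real^2"
  by (simp add: inner_vec_def UNIV_2)

lemma norm_vec2_sq: "(norm v)\<^sup>2 = (v$1)\<^sup>2 + (v$2)\<^sup>2"
  for v :: "real^2"
  unfolding power2_norm_eq_inner by (simp add: inner_vec2 power2_eq_square)

lemma vec2_eq_iff: "x = y \<longleftrightarrow> x$1 = y$1 \<and> x$2 = (y$2 :: real)"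
  for x y :: "real^2"
  by (simp add: vec_eq_iff forall_2)

lemma vector_nth_vec2 [simp]: "vector [x$1, x$2] = (x :: real^2)"
  by (simp add: vec2_eq_iff)

lemma cross2_eq_inner_perp: "cross2 u v = u \<bullet> perp v"
  by (simp add: perp_def inner_vec2)

lemma inner_perp_perp: "perp u \<bullet> perp v = u \<bullet> v"
  by (simp add: perp_def inner_vec2 algebra_simps)

lemma norm_perp [simp]: "norm (perp v) = norm v"
  by (simp add: norm_eq_sqrt_inner inner_perp_perp)

lemma cross2_sq: "(cross2 u v)\<^sup>2 = (norm u)\<^sup>2 * (norm v)\<^sup>2 - (u \<bullet> v)\<^sup>2"
  unfolding norm_vec2_sq by (simp add: inner_vec2 power2_eq_square algebra_simps)

lemma abs_cross2_le: "\<bar>cross2 u v\<bar> \<le> norm u * norm v"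
  using Cauchy_Schwarz_ineq2[of u "perp v"] by (simp add: cross2_eq_inner_perp)

lemma abs_cross2_commute: "\<bar>cross2 b a\<bar> = \<bar>cross2 a b\<bar>"
  by argo

lemma cross2_commute_nonzero: "cross2 a b \<noteq> 0 \<Longrightarrow> cross2 b a \<noteq> 0"
  by argo

lemma reciprocal_basis_vec2:
  assumes "cross2 a b \<noteq> 0"
  shows "(s *\<^sub>R a + t *\<^sub>R b) \<bullet> ((1 / cross2 a b) *\<^sub>R perp b) = s"
    "(s *\<^sub>R a + t *\<^sub>R b) \<bullet> ((- 1 / cross2 a b) *\<^sub>R perp a) = t"
    "((1 / cross2 a b) *\<^sub>R perp b) \<bullet> ((1 / cross2 a b) *\<^sub>R perp b) = (norm b)\<^sup>2 / (cross2 a b)\<^sup>2"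
    "((- 1 / cross2 a b) *\<^sub>R perp a) \<bullet> ((- 1 / cross2 a b) *\<^sub>R perp a) = (norm a)\<^sup>2 / (cross2 a b)\<^sup>2"
    "((1 / cross2 a b) *\<^sub>R perp b) \<bullet> ((- 1 / cross2 a b) *\<^sub>R perp a) = - (a \<bullet> b) / (cross2 a b)\<^sup>2"
proof -
  have "(s *\<^sub>R a + t *\<^sub>R b) \<bullet> perp b = s * cross2 a b" "(s *\<^sub>R a + t *\<^sub>R b) \<bullet> perp a = - t * cross2 a b"
    by (simp_all add: perp_def inner_vec2 algebra_simps)
  then show "(s *\<^sub>R a + t *\<^sub>R b) \<bullet> ((1 / cross2 a b) *\<^sub>R perp b) = s"
    "(s *\<^sub>R a + t *\<^sub>R b) \<bullet> ((- 1 / cross2 a b) *\<^sub>R perp a) = t"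
    using assms by simp_all
qed (simp_all add: inner_perp_perp dot_square_norm power2_eq_square inner_commute)

lemma cross2_decomposition:
  assumes "cross2 a b \<noteq> 0"
  shows "e = (cross2 e b / cross2 a b) *\<^sub>R a + (cross2 a e / cross2 a b) *\<^sub>R b"
proof -
  have "cross2 a b *\<^sub>R e = cross2 e b *\<^sub>R a + cross2 a e *\<^sub>R b"
    by (simp add: vec2_eq_iff algebra_simps)
  then have "(1 / cross2 a b) *\<^sub>R (cross2 a b *\<^sub>R e) = (1 / cross2 a b) *\<^sub>R (cross2 e b *\<^sub>R a + cross2 a e *\<^sub>R b)"
    by simp
  then show ?thesis
    using assms by (simp add: scaleR_add_right)
qed

lemma Basis_vec2: "(Basis :: (real^2) set) = {axis 1 1, axis 2 1}"
  by (auto simp: Basis_vec_def UNIV_2)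

lemma sum_Basis_vec2: "(\<Sum>e\<in>(Basis :: (real^2) set). f e) = f (axis 1 1) + f (axis 2 1)"
  by (simp add: Basis_vec2 axis_eq_axis)

lemma trace_mult_cross2:
  fixes L :: "real^2 \<Rightarrow> real^2"
  assumes "linear L"
  shows "(\<Sum>e\<in>Basis. L e \<bullet> e) * cross2 a b = cross2 (L a) b + cross2 a (L b)"
proof -
  have decomp: "L v = v$1 *\<^sub>R L (axis 1 1) + v$2 *\<^sub>R L (axis 2 1)" for v
  proof -
    have "v = v$1 *\<^sub>R axis 1 1 + v$2 *\<^sub>R axis 2 1"
      by (simp add: vec2_eq_iff axis_def)
    then have "L v = L (v$1 *\<^sub>R axis 1 1 + v$2 *\<^sub>R axis 2 1)"
      by (rule arg_cong)
    then show ?thesis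
      using assms by (simp add: linear_add linear_scale)
  qed
  show ?thesis
    by (simp add: sum_Basis_vec2 inner_axis decomp[of a] decomp[of b] algebra_simps)
qed

lemma bounded_linear_cross2:
  "bounded_linear (\<lambda>v. cross2 a v)" "bounded_linear (\<lambda>v. cross2 v b)"
  by (auto simp: linear_conv_bounded_linear[symmetric] intro!: linearI simp: algebra_simps)

section \<open>Integration over parallelograms\<close>

definition parallelogram :: "real^2 \<Rightarrow> real^2 \<Rightarrow> real^2 \<Rightarrow> (real^2) set" where
  "parallelogram p a b = {p + s *\<^sub>R a + t *\<^sub>R b | s t. 0 < s \<and> s < 1 \<and> 0 < t \<and> t < 1}"

lemma is_parallelogram_iff:
  "is_parallelogram \<Omega> \<longleftrightarrow> (\<exists>p a b. cross2 a b \<noteq> 0 \<and> \<Omega> = parallelogram p a b)"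
  unfolding is_parallelogram_def parallelogram_def ..

lemma parallelogram_commute: "parallelogram p a b = parallelogram p b a"
  unfolding parallelogram_def by (auto simp: add_ac) (metis add.commute)+

lemma mem_parallelogram_iff:
  assumes nondeg: "cross2 a b \<noteq> 0"
  shows "p + s *\<^sub>R a + t *\<^sub>R b \<in> parallelogram p a b \<longleftrightarrow> 0 < s \<and> s < 1 \<and> 0 < t \<and> t < 1"
proof
  assume "p + s *\<^sub>R a + t *\<^sub>R b \<in> parallelogram p a b"
  then obtain s' t' where eq: "s *\<^sub>R a + t *\<^sub>R b = s' *\<^sub>R a + t' *\<^sub>R b"
    and "0 < s'" "s' < 1" "0 < t'" "t' < 1"
    unfolding parallelogram_def by (auto simp: add.assoc)
  moreover have "s = s'" "t = t'"
    using reciprocal_basis_vec2(1,2)[OF nondeg, of s t] reciprocal_basis_vec2(1,2)[OF nondeg, of s' t']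
    by (simp_all only: eq)
  ultimately show "0 < s \<and> s < 1 \<and> 0 < t \<and> t < 1"
    by simp
qed (auto simp: parallelogram_def)

lemma cbox_vec2: "cbox (vector [u1, u2]) (vector [v1, v2]) = {x::real^2. u1 \<le> x$1 \<and> x$1 \<le> v1 \<and> u2 \<le> x$2 \<and> x$2 \<le> v2}"
  by (auto simp: mem_box_cart forall_2)

lemma content_cbox_vec2:
  "Henstock_Kurzweil_Integration.content (cbox (vector [u1, u2]) (vector [v1, v2]) :: (real^2) set) =
     (if u1 \<le> v1 \<and> u2 \<le> v2 then (v1 - u1) * (v2 - u2) else 0)"
proof (cases "u1 \<le> v1 \<and> u2 \<le> v2")
  case True
  then show ?thesis by (simp add: content_cbox_cart interval_ne_empty_cart forall_2 UNIV_2)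
next
  case False
  then have "cbox (vector [u1, u2]) (vector [v1, v2]) = ({} :: (real^2) set)"
    by (auto simp: cbox_vec2)
  then show ?thesis unfolding if_not_P[OF False] by simp
qed

lemma integral_unit_square_iterated:
  fixes G :: "real^2 \<Rightarrow> real"
  assumes "continuous_on (cbox 0 1) G"
  shows "integral (cbox 0 1) G = integral {0..1} (\<lambda>s. integral {0..1} (\<lambda>t. G (vector [s, t])))"
proof -
  define g :: "real \<times> real \<Rightarrow> real^2" where "g = (\<lambda>(s, t). vector [s, t])"
  define h :: "real^2 \<Rightarrow> real \<times> real" where "h = (\<lambda>x. (x$1, x$2))"
  have hg: "h (g z) = z" and gh: "g (h x) = x" for z x
    by (auto simp: g_def h_def vec2_eq_iff split: prod.splits)
  have g_cbox: "g ` cbox (u1, u2) (v1, v2) = cbox (vector [u1, u2]) (vector [v1, v2])" for u1 u2 v1 v2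
  proof safe
    fix x :: "real^2" assume "x \<in> cbox (vector [u1, u2]) (vector [v1, v2])"
    then show "x \<in> g ` cbox (u1, u2) (v1, v2)"
      by (intro image_eqI[of _ _ "(x$1, x$2)"]) (auto simp: gh[unfolded h_def] cbox_vec2 cbox_Pair_eq)
  qed (auto simp: g_def cbox_vec2 cbox_Pair_eq)
  have h_cbox: "h ` cbox w z = cbox (w$1, w$2) (z$1, z$2)" for w z :: "real^2"
    using arg_cong[OF g_cbox[of "w$1" "w$2" "z$1" "z$2"], of "(`) h"]
    by (simp add: image_image hg)
  have g_eq: "g = (\<lambda>z. fst z *\<^sub>R axis 1 1 + snd z *\<^sub>R axis 2 1)"
    by (auto simp: g_def vec2_eq_iff axis_def)
  have cont_g: "continuous (at z) g" for z
    unfolding g_eq by (intro continuous_intros)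
  have "vector [0, 0] = (0 :: real^2)" "vector [1, 1] = (1 :: real^2)"
    by (simp_all add: vec2_eq_iff)
  then have unit: "g ` cbox (0, 0) (1, 1) = cbox 0 1" "h ` cbox 0 1 = cbox (0, 0) (1, 1)"
    using g_cbox[of 0 0 1 1] h_cbox[of 0 1] by simp_all
  have "((\<lambda>z. G (g z)) has_integral (1 / 1) *\<^sub>R integral (cbox 0 1) G) (h ` cbox 0 1)"
  proof (rule has_integral_twiddle[OF _ hg gh cont_g])
    show "\<exists>w z. g ` cbox u v = cbox w z" for u v
      by (cases u; cases v) (use g_cbox in blast)
    show "\<exists>w z. h ` cbox u v = cbox w z" for u v
      using h_cbox by blast
    show "Henstock_Kurzweil_Integration.content (g ` cbox u v) = 1 * Henstock_Kurzweil_Integration.content (cbox u v)" for u v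
      by (cases u; cases v) (auto simp: g_cbox content_cbox_vec2 content_Pair)
    show "(G has_integral integral (cbox 0 1) G) (cbox 0 1)"
      using assms integrable_continuous by blast
  qed simp_all
  then have "integral (cbox (0, 0) (1, 1)) (\<lambda>z. G (g z)) = integral (cbox 0 1) G"
    by (simp add: unit integral_unique)
  moreover have "continuous_on (cbox (0, 0) (1, 1)) (\<lambda>z. G (g z))"
    by (intro continuous_on_compose2[OF assms] continuous_at_imp_continuous_on cont_g ballI)
       (simp add: unit)
  ultimately show ?thesis
    using integral_prod_continuous[of 0 0 1 1 "\<lambda>z. G (g z)"] by (simp add: g_def)
qed

lemma det_matrix_vec2_combination:
  "det (matrix (\<lambda>x::real^2. x$1 *\<^sub>R a + x$2 *\<^sub>R b)) = cross2 a b"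
  by (simp add: det_2 matrix_def axis_def)

lemma parallelogram_eq_image:
  "parallelogram p a b = (\<lambda>x::real^2. p + (x$1 *\<^sub>R a + x$2 *\<^sub>R b)) ` box 0 1"
  unfolding parallelogram_def
proof safe
  fix s t :: real assume "0 < s" "s < 1" "0 < t" "t < 1"
  then show "p + s *\<^sub>R a + t *\<^sub>R b \<in> (\<lambda>x::real^2. p + (x$1 *\<^sub>R a + x$2 *\<^sub>R b)) ` box 0 1"
    by (intro image_eqI[of _ _ "vector [s, t]"]) (auto simp: mem_box_cart forall_2 add.assoc)
qed (force simp: mem_box_cart forall_2 add.assoc)

lemma
  fixes f :: "real^2 \<Rightarrow> real"
  assumes nondeg: "cross2 a b \<noteq> 0" and f: "continuous_on UNIV f"
  shows set_integrable_parallelogram: "set_integrable lebesgue (parallelogram p a b) f"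
    and set_integral_parallelogram_eq_box: "(LINT x:parallelogram p a b|lebesgue. f x) =
      \<bar>cross2 a b\<bar> * integral (box 0 1) (\<lambda>x::real^2. f (p + (x$1 *\<^sub>R a + x$2 *\<^sub>R b)))"
proof -
  define L :: "real^2 \<Rightarrow> real^2" where "L = (\<lambda>x. x$1 *\<^sub>R a + x$2 *\<^sub>R b)"
  define g where "g = (\<lambda>x. p + L x)"
  define F :: "real^2 \<Rightarrow> real^1" where "F = (\<lambda>x. vec (f x))"
  have lin: "linear L"
    unfolding L_def by (intro linearI) (auto simp: algebra_simps)
  have deriv: "(g has_derivative L) (at x within box 0 1)" for x
    unfolding g_def using lin by (auto intro!: derivative_eq_intros linear_imp_has_derivative)
  have "inj L"
    using det_nz_iff_inj[OF lin] nondeg by (simp add: L_def det_matrix_vec2_combination)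
  then have inj: "inj_on g (box 0 1)"
    by (auto simp: g_def inj_on_def dest: injD)
  have cont_fg: "continuous_on UNIV (\<lambda>x. f (g x))"
    unfolding g_def L_def by (intro continuous_on_compose2[OF f] continuous_intros) auto
  have "(\<lambda>x. \<bar>cross2 a b\<bar> *\<^sub>R F (g x)) absolutely_integrable_on cbox 0 1"
    unfolding F_def vec_def
    by (intro absolutely_integrable_continuous continuous_intros continuous_on_subset[OF cont_fg]) auto
  then have ai: "(\<lambda>x. \<bar>cross2 a b\<bar> *\<^sub>R F (g x)) absolutely_integrable_on box 0 1"
    by (rule set_integrable_subset) (auto simp: box_subset_cbox)
  have "F absolutely_integrable_on g ` box 0 1 \<and>
      integral (g ` box 0 1) F = integral (box 0 1) (\<lambda>x. \<bar>cross2 a b\<bar> *\<^sub>R F (g x))"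
    using has_absolute_integral_change_of_variables[OF _ deriv inj,
        of F "integral (box 0 1) (\<lambda>x. \<bar>cross2 a b\<bar> *\<^sub>R F (g x))"] ai
    unfolding L_def det_matrix_vec2_combination by simp
  then have F_ai: "F absolutely_integrable_on parallelogram p a b"
    and F_int: "integral (parallelogram p a b) F = integral (box 0 1) (\<lambda>x. \<bar>cross2 a b\<bar> *\<^sub>R F (g x))"
    by (simp_all add: parallelogram_eq_image g_def L_def)
  show fi: "set_integrable lebesgue (parallelogram p a b) f"
    using absolutely_integrable_linear[OF F_ai bounded_linear_vec_nth[of 1]] by (simp add: o_def F_def)
  have "(LINT x:parallelogram p a b|lebesgue. f x) = integral (parallelogram p a b) (\<lambda>x. F x $ 1)"
    using set_lebesgue_integral_eq_integral(2)[OF fi] by (simp add: F_def)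
  also have "\<dots> = integral (box 0 1) (\<lambda>x. \<bar>cross2 a b\<bar> *\<^sub>R F (g x)) $ 1"
    using integral_component_eq_cart[OF set_lebesgue_integral_eq_integral(1)[OF F_ai]] F_int
    by simp
  also have "\<dots> = integral (box 0 1) (\<lambda>x. (\<bar>cross2 a b\<bar> *\<^sub>R F (g x)) $ 1)"
    by (rule integral_component_eq_cart[OF set_lebesgue_integral_eq_integral(1)[OF ai], symmetric])
  finally show "(LINT x:parallelogram p a b|lebesgue. f x) =
      \<bar>cross2 a b\<bar> * integral (box 0 1) (\<lambda>x::real^2. f (p + (x$1 *\<^sub>R a + x$2 *\<^sub>R b)))"
    by (simp add: F_def g_def L_def)
qed

lemma set_integral_parallelogram:
  fixes f :: "real^2 \<Rightarrow> real"
  assumes nondeg: "cross2 a b \<noteq> 0" and f: "continuous_on UNIV f"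
  shows "(LINT x:parallelogram p a b|lebesgue. f x) =
    \<bar>cross2 a b\<bar> * integral {0..1} (\<lambda>s. integral {0..1} (\<lambda>t. f (p + s *\<^sub>R a + t *\<^sub>R b)))"
proof -
  have "continuous_on (cbox 0 1) (\<lambda>x::real^2. f (p + (x$1 *\<^sub>R a + x$2 *\<^sub>R b)))"
    by (intro continuous_on_compose2[OF f] continuous_intros) auto
  then show ?thesis
    using integral_unit_square_iterated
    by (simp add: set_integral_parallelogram_eq_box[OF assms] integral_open_interval add.assoc)
qed

lemma iterated_integral_unit_square_separable:
  fixes P Q R S :: "real \<Rightarrow> real"
  assumes "(P has_integral IP) {0..1}" "(Q has_integral IQ) {0..1}"
    "(R has_integral IR) {0..1}" "(S has_integral IS) {0..1}"
  shows "integral {0..1} (\<lambda>s. integral {0..1} (\<lambda>t. P s + Q s * R t + S t)) = IP + IQ * IR + IS"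
proof -
  have inner: "((\<lambda>t. P s + Q s * R t + S t) has_integral P s + Q s * IR + IS) {0..1}" for s
    using has_integral_add[OF has_integral_add[OF has_integral_const_real[of "P s" 0 1]
        has_integral_mult_right[OF assms(3), of "Q s"]] assms(4)]
    by simp
  have outer: "((\<lambda>s. P s + Q s * IR + IS) has_integral IP + IQ * IR + IS) {0..1}"
    using has_integral_add[OF has_integral_add[OF assms(1) has_integral_mult_left[OF assms(2), of IR]]
        has_integral_const_real[of IS 0 1]]
    by simp
  show ?thesis
    by (simp add: integral_unique[OF inner] integral_unique[OF outer])
qed

lemma set_integral_parallelogram_separable:
  fixes h :: "real^2 \<Rightarrow> real" and P Q R S :: "real \<Rightarrow> real"
  assumes nondeg: "cross2 a b \<noteq> 0" and cont: "continuous_on UNIV h"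
    and param: "\<And>s t. h (p + s *\<^sub>R a + t *\<^sub>R b) = P s + Q s * R t + S t"
    and "(P has_integral IP) {0..1}" "(Q has_integral IQ) {0..1}"
      "(R has_integral IR) {0..1}" "(S has_integral IS) {0..1}"
  shows "(LINT x:parallelogram p a b|lebesgue. h x) = \<bar>cross2 a b\<bar> * (IP + IQ * IR + IS)"
  using iterated_integral_unit_square_separable[OF assms(4-7)]
  by (simp add: set_integral_parallelogram[OF nondeg cont] param)

lemma sets_lebesgue_parallelogram:
  assumes "cross2 a b \<noteq> 0"
  shows "parallelogram p a b \<in> sets lebesgue"
proof -
  have "integrable lebesgue (indicat_real (parallelogram p a b))"
    using set_integrable_parallelogram[OF assms, of "\<lambda>_. 1" p] by (simp add: set_integrable_def)
  then have "indicat_real (parallelogram p a b) \<in> borel_measurable lebesgue"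
    by (rule borel_measurable_integrable)
  then show ?thesis
    by (simp add: borel_measurable_indicator_iff)
qed

lemma has_integral_derivative_segment:
  fixes F :: "'a::real_normed_vector \<Rightarrow> real"
  assumes "\<And>x. (F has_derivative DF x) (at x)"
  shows "((\<lambda>t. DF (q + t *\<^sub>R v) v) has_integral F (q + v) - F q) {0..1}"
proof -
  have "((\<lambda>t. DF (q + t *\<^sub>R v) v) has_integral F (q + 1 *\<^sub>R v) - F (q + 0 *\<^sub>R v)) {0..1}"
  proof (rule fundamental_theorem_of_calculus)
    fix t :: real
    have "((\<lambda>t. F (q + t *\<^sub>R v)) has_derivative (\<lambda>h. DF (q + t *\<^sub>R v) (h *\<^sub>R v))) (at t within {0..1})"
      by (rule has_derivative_compose[OF _ assms]) (auto intro!: derivative_eq_intros)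
    moreover have "DF (q + t *\<^sub>R v) (h *\<^sub>R v) = h *\<^sub>R DF (q + t *\<^sub>R v) v" for h
      using linear_scale[OF has_derivative_linear[OF assms]] .
    ultimately show "((\<lambda>t. F (q + t *\<^sub>R v)) has_vector_derivative DF (q + t *\<^sub>R v) v) (at t within {0..1})"
      by (simp add: has_vector_derivative_def)
  qed simp
  then show ?thesis by simp
qed

lemma set_integral_parallelogram_derivative:
  fixes F :: "real^2 \<Rightarrow> real"
  assumes nondeg: "cross2 a b \<noteq> 0"
    and deriv: "\<And>x. (F has_derivative DF x) (at x)"
    and cont: "\<And>v. continuous_on UNIV (\<lambda>x. DF x v)"
  shows "(LINT x:parallelogram p a b|lebesgue. DF x b) =
    \<bar>cross2 a b\<bar> * integral {0..1} (\<lambda>s. F (p + s *\<^sub>R a + b) - F (p + s *\<^sub>R a))"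
proof -
  have "integral {0..1} (\<lambda>t. DF (p + s *\<^sub>R a + t *\<^sub>R b) b) = F (p + s *\<^sub>R a + b) - F (p + s *\<^sub>R a)" for s
    using has_integral_derivative_segment[OF deriv, of "p + s *\<^sub>R a" b] by (simp add: integral_unique)
  then show ?thesis
    by (simp add: set_integral_parallelogram[OF nondeg cont])
qed

lemma abs_set_integral_parallelogram_derivative_le:
  fixes F :: "real^2 \<Rightarrow> real"
  assumes nondeg: "cross2 a b \<noteq> 0"
    and deriv: "\<And>x. (F has_derivative DF x) (at x)"
    and cont: "\<And>v. continuous_on UNIV (\<lambda>x. DF x v)"
    and bound: "\<And>x. \<bar>F x\<bar> \<le> B"
  shows "\<bar>LINT x:parallelogram p a b|lebesgue. DF x b\<bar> \<le> 2 * B * \<bar>cross2 a b\<bar>"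
proof -
  have cont_F: "continuous_on UNIV F"
    using deriv by (meson continuous_at_imp_continuous_on has_derivative_continuous)
  have "continuous_on {0..1} (\<lambda>s. F (p + s *\<^sub>R a + b) - F (p + s *\<^sub>R a))"
    by (intro continuous_intros continuous_on_compose2[OF cont_F]) auto
  moreover have "\<bar>F (p + s *\<^sub>R a + b) - F (p + s *\<^sub>R a)\<bar> \<le> 2 * B" for s
    using bound[of "p + s *\<^sub>R a + b"] bound[of "p + s *\<^sub>R a"] by linarith
  ultimately have "\<bar>integral {0..1} (\<lambda>s. F (p + s *\<^sub>R a + b) - F (p + s *\<^sub>R a))\<bar> \<le> 2 * B"
    using integral_bound[of 0 1 "\<lambda>s. F (p + s *\<^sub>R a + b) - F (p + s *\<^sub>R a)" "2 * B"] by simp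
  then have "\<bar>cross2 a b\<bar> * \<bar>integral {0..1} (\<lambda>s. F (p + s *\<^sub>R a + b) - F (p + s *\<^sub>R a))\<bar>
      \<le> \<bar>cross2 a b\<bar> * (2 * B)"
    by (rule mult_left_mono) simp
  then show ?thesis
    unfolding set_integral_parallelogram_derivative[OF assms(1-3)] by (simp add: abs_mult mult_ac)
qed

lemma set_integral_parallelogram_derivative_eq_0:
  fixes F :: "real^2 \<Rightarrow> real"
  assumes nondeg: "cross2 a b \<noteq> 0"
    and deriv: "\<And>x. (F has_derivative DF x) (at x)"
    and cont: "\<And>v. continuous_on UNIV (\<lambda>x. DF x v)"
    and vanish: "\<And>x. x \<notin> parallelogram p a b \<Longrightarrow> F x = 0"
  shows "(LINT x:parallelogram p a b|lebesgue. DF x e) = 0"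
proof -
  have nondeg': "cross2 b a \<noteq> 0"
    using cross2_commute_nonzero[OF nondeg] .
  have edges: "F (p + s *\<^sub>R a + b) = 0" "F (p + s *\<^sub>R a) = 0"
    "F (p + s *\<^sub>R b + a) = 0" "F (p + s *\<^sub>R b) = 0" for s
    using vanish mem_parallelogram_iff[OF nondeg, of p s 1] mem_parallelogram_iff[OF nondeg, of p s 0]
      mem_parallelogram_iff[OF nondeg', of p s 1] mem_parallelogram_iff[OF nondeg', of p s 0]
    by (simp_all add: parallelogram_commute[of p b a])
  have int_b: "(LINT x:parallelogram p a b|lebesgue. DF x b) = 0"
    by (simp add: set_integral_parallelogram_derivative[OF nondeg deriv cont] edges)
  have int_a: "(LINT x:parallelogram p a b|lebesgue. DF x a) = 0"
    using set_integral_parallelogram_derivative[OF nondeg' deriv cont, of p]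
    by (simp add: parallelogram_commute[of p b a] edges)
  define \<alpha> where "\<alpha> = cross2 e b / cross2 a b"
  define \<beta> where "\<beta> = cross2 a e / cross2 a b"
  have "e = \<alpha> *\<^sub>R a + \<beta> *\<^sub>R b"
    unfolding \<alpha>_def \<beta>_def by (rule cross2_decomposition[OF nondeg])
  then have "DF x e = \<alpha> * DF x a + \<beta> * DF x b" for x
    using has_derivative_linear[OF deriv] by (simp add: linear_add linear_scale)
  then have "(LINT x:parallelogram p a b|lebesgue. DF x e) =
      \<alpha> * (LINT x:parallelogram p a b|lebesgue. DF x a) + \<beta> * (LINT x:parallelogram p a b|lebesgue. DF x b)"
    using set_integrable_parallelogram[OF nondeg cont] by simp
  then show ?thesis
    unfolding int_a int_b by simp
qed

section \<open>Perimeter, area and width\<close>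

text \<open>Scaled by \<open>cross2 a b\<close>, the divergence of \<open>\<phi>\<close> is the derivative of \<open>cross2 (\<phi> x) b\<close>
  along \<open>a\<close> plus that of \<open>cross2 a (\<phi> x)\<close> along \<open>b\<close>; for \<open>norm (\<phi> x) \<le> 1\<close> these functions
  are bounded by the edge lengths, so integrating edge by edge bounds the integral.\<close>

lemma set_integral_parallelogram_divergence_le:
  fixes \<phi> :: "real^2 \<Rightarrow> real^2"
  assumes nondeg: "cross2 a b \<noteq> 0"
    and C1: "C1c_on UNIV \<phi> D" and bound: "\<And>x. norm (\<phi> x) \<le> 1"
  shows "(LINT x:parallelogram p a b|lebesgue. (\<Sum>e\<in>Basis. D x e \<bullet> e)) \<le> 2 * (norm a + norm b)"
proof -
  have deriv: "\<And>x. (\<phi> has_derivative D x) (at x)" and cont: "\<And>v. continuous_on UNIV (\<lambda>x. D x v)"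
    using C1 unfolding C1c_on_def by auto
  have nondeg': "cross2 b a \<noteq> 0"
    using cross2_commute_nonzero[OF nondeg] .
  have deriv_a: "((\<lambda>x. cross2 a (\<phi> x)) has_derivative (\<lambda>v. cross2 a (D x v))) (at x)"
    and deriv_b: "((\<lambda>x. cross2 (\<phi> x) b) has_derivative (\<lambda>v. cross2 (D x v) b)) (at x)" for x
    using bounded_linear.has_derivative[OF bounded_linear_cross2(1) deriv]
      bounded_linear.has_derivative[OF bounded_linear_cross2(2) deriv] by auto
  have cont_a: "continuous_on UNIV (\<lambda>x. cross2 a (D x v))"
    and cont_b: "continuous_on UNIV (\<lambda>x. cross2 (D x v) b)" for v
    using bounded_linear.continuous_on[OF bounded_linear_cross2(1) cont]
      bounded_linear.continuous_on[OF bounded_linear_cross2(2) cont] by auto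
  have bound_a: "\<bar>cross2 a (\<phi> x)\<bar> \<le> norm a" and bound_b: "\<bar>cross2 (\<phi> x) b\<bar> \<le> norm b" for x
    using abs_cross2_le[of a "\<phi> x"] abs_cross2_le[of "\<phi> x" b] bound[of x]
      mult_left_mono[of "norm (\<phi> x)" 1 "norm a"] mult_right_mono[of "norm (\<phi> x)" 1 "norm b"]
    by auto
  define I_a where "I_a = (LINT x:parallelogram p a b|lebesgue. cross2 a (D x b))"
  define I_b where "I_b = (LINT x:parallelogram p a b|lebesgue. cross2 (D x a) b)"
  have bound_I_a: "\<bar>I_a\<bar> \<le> 2 * norm a * \<bar>cross2 a b\<bar>"
    unfolding I_a_def by (rule abs_set_integral_parallelogram_derivative_le[OF nondeg deriv_a cont_a bound_a])
  have bound_I_b: "\<bar>I_b\<bar> \<le> 2 * norm b * \<bar>cross2 a b\<bar>"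
    using abs_set_integral_parallelogram_derivative_le[OF nondeg' deriv_b cont_b bound_b, of p]
    by (simp add: I_b_def parallelogram_commute[of p b a] abs_cross2_commute)
  have "(LINT x:parallelogram p a b|lebesgue. (\<Sum>e\<in>Basis. D x e \<bullet> e)) = (I_b + I_a) / cross2 a b"
  proof -
    have "(\<Sum>e\<in>Basis. D x e \<bullet> e) = (cross2 (D x a) b + cross2 a (D x b)) / cross2 a b" for x
      using trace_mult_cross2[OF has_derivative_linear[OF deriv], of x a b] nondeg
      by (simp add: field_simps)
    then show ?thesis
      using set_integrable_parallelogram[OF nondeg cont_a] set_integrable_parallelogram[OF nondeg cont_b]
      by (simp add: I_a_def I_b_def add_divide_distrib)
  qed
  also have "\<dots> \<le> \<bar>I_b + I_a\<bar> / \<bar>cross2 a b\<bar>"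
    by (metis abs_divide abs_ge_self)
  also have "\<dots> \<le> (2 * norm b * \<bar>cross2 a b\<bar> + 2 * norm a * \<bar>cross2 a b\<bar>) / \<bar>cross2 a b\<bar>"
    using bound_I_a bound_I_b by (intro divide_right_mono) auto
  also have "\<dots> = 2 * (norm a + norm b)"
    using nondeg by (simp add: field_simps)
  finally show ?thesis .
qed

lemma C1c_on_zero: "C1c_on U (\<lambda>_. 0) (\<lambda>_ _. 0)"
  unfolding C1c_on_def by (auto intro!: exI[of _ "{}"])

lemma perimeter_parallelogram_bounds:
  assumes nondeg: "cross2 a b \<noteq> 0"
  shows "0 \<le> perimeter (parallelogram p a b)" "perimeter (parallelogram p a b) \<le> 2 * (norm a + norm b)"
proof -
  define S where "S = {(LINT x:parallelogram p a b|lebesgue. (\<Sum>b\<in>Basis. D x b \<bullet> b)) |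
      (\<phi>::real^2 \<Rightarrow> real^2) D. C1c_on UNIV \<phi> D \<and> (\<forall>x. norm (\<phi> x) \<le> 1)}"
  have zero: "0 \<in> S"
    unfolding S_def
    by (intro CollectI exI[of _ "\<lambda>_. 0"] exI[of _ "\<lambda>_ _. 0"]) (simp add: C1c_on_zero)
  have upper: "\<And>y. y \<in> S \<Longrightarrow> y \<le> 2 * (norm a + norm b)"
    unfolding S_def using set_integral_parallelogram_divergence_le[OF nondeg] by blast
  show "0 \<le> perimeter (parallelogram p a b)"
    unfolding perimeter_def S_def[symmetric] using zero upper by (intro cSup_upper) (auto simp: bdd_above_def)
  show "perimeter (parallelogram p a b) \<le> 2 * (norm a + norm b)"
    unfolding perimeter_def S_def[symmetric] using zero upper by (intro cSup_least) auto
qed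

lemma area_parallelogram:
  assumes "cross2 a b \<noteq> 0"
  shows "area (parallelogram p a b) = \<bar>cross2 a b\<bar>"
  using set_integrable_parallelogram[OF assms, of "\<lambda>_. 1" p] set_integral_parallelogram[OF assms, of "\<lambda>_. 1" p]
  by (simp add: area_def set_lebesgue_integral_def set_integrable_def)

lemma min_width_parallelogram_le:
  assumes nondeg: "cross2 a b \<noteq> 0"
  shows "min_width (parallelogram p a b) \<le> \<bar>cross2 a b\<bar> / norm a"
proof -
  have a0: "norm a \<noteq> 0"
    using nondeg by auto
  define \<nu> where "\<nu> = (1 / norm a) *\<^sub>R perp a"
  define h where "h = cross2 b a / norm a"
  have proj: "{x \<bullet> \<nu> | x. x \<in> parallelogram p a b} = (\<lambda>t. h *\<^sub>R t + p \<bullet> \<nu>) ` {0<..<1}"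
  proof -
    have "(p + s *\<^sub>R a + t *\<^sub>R b) \<bullet> \<nu> = h * t + p \<bullet> \<nu>" for s t
      using a0 by (simp add: \<nu>_def h_def perp_def inner_vec2 field_simps)
    then show ?thesis
      unfolding parallelogram_def by (auto simp: image_iff) (metis)+
  qed
  have "norm \<nu> = 1"
    using a0 by (simp add: \<nu>_def)
  then have "min_width (parallelogram p a b) \<le> measure lebesgue {x \<bullet> \<nu> | x. x \<in> parallelogram p a b}"
    unfolding min_width_def by (intro cINF_lower) (auto simp: bdd_below_def intro!: exI[of _ 0])
  also have "\<dots> = \<bar>h\<bar>"
    unfolding proj measure_lebesgue_affine by simp
  also have "\<bar>h\<bar> = \<bar>cross2 a b\<bar> / norm a"
    by (simp add: h_def abs_cross2_commute)
  finally show ?thesis .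
qed

lemma perimeter_mult_min_width_parallelogram_le:
  assumes nondeg: "cross2 a b \<noteq> 0"
  shows "perimeter (parallelogram p a b) * min_width (parallelogram p a b) \<le> 4 * area (parallelogram p a b)"
proof -
  define L where "L = max (norm a) (norm b)"
  have L: "0 < L"
    using nondeg by (auto simp: L_def max_def)
  have width: "min_width (parallelogram p a b) \<le> \<bar>cross2 a b\<bar> / L"
    using min_width_parallelogram_le[OF nondeg, of p]
      min_width_parallelogram_le[OF cross2_commute_nonzero[OF nondeg], of p]
    by (auto simp: L_def max_def parallelogram_commute[of p b a] abs_cross2_commute)
  have perimeter: "0 \<le> perimeter (parallelogram p a b)" "perimeter (parallelogram p a b) \<le> 4 * L"
    using perimeter_parallelogram_bounds[OF nondeg, of p] by (auto simp: L_def)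
  have "perimeter (parallelogram p a b) * min_width (parallelogram p a b)
      \<le> perimeter (parallelogram p a b) * (\<bar>cross2 a b\<bar> / L)"
    using width perimeter(1) by (rule mult_left_mono)
  also have "\<dots> \<le> (4 * L) * (\<bar>cross2 a b\<bar> / L)"
    using perimeter(2) L by (intro mult_right_mono) auto
  also have "\<dots> = 4 * area (parallelogram p a b)"
    using L by (simp add: area_parallelogram[OF nondeg])
  finally show ?thesis .
qed

section \<open>Test functions for the Neumann eigenvalue\<close>

lemma weak_gradient_H1_parallelogram:
  fixes u :: "real^2 \<Rightarrow> real" and g :: "real^2 \<Rightarrow> real^2"
  assumes nondeg: "cross2 a b \<noteq> 0"
    and deriv: "\<And>x. (u has_derivative (\<lambda>v. g x \<bullet> v)) (at x)"
    and cont_g: "continuous_on UNIV g"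
  shows "weak_gradient_H1 (parallelogram p a b) u g"
proof -
  have cont_u: "continuous_on UNIV u"
    using deriv by (meson continuous_at_imp_continuous_on has_derivative_continuous)
  have "set_integrable lebesgue (parallelogram p a b) u"
    by (rule set_integrable_parallelogram[OF nondeg cont_u])
  then have meas_u: "set_borel_measurable lebesgue (parallelogram p a b) u"
    unfolding set_integrable_def set_borel_measurable_def by (rule borel_measurable_integrable)
  have "g \<in> borel_measurable lebesgue"
    using continuous_imp_measurable_on_sets_lebesgue[OF cont_g] by simp
  then have meas_g: "set_borel_measurable lebesgue (parallelogram p a b) g"
    using sets_lebesgue_parallelogram[OF nondeg] unfolding set_borel_measurable_def by measurable
  have parts: "(LINT x:parallelogram p a b|lebesgue. u x * D x e) =
      - (LINT x:parallelogram p a b|lebesgue. (g x \<bullet> e) * \<psi> x)"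
    if "C1c_on (parallelogram p a b) \<psi> D" for \<psi> D e
  proof -
    have deriv_\<psi>: "\<And>x. (\<psi> has_derivative D x) (at x)"
      and cont_D: "\<And>v. continuous_on UNIV (\<lambda>x. D x v)"
      and supp: "\<And>x. x \<notin> parallelogram p a b \<Longrightarrow> \<psi> x = 0"
      using that unfolding C1c_on_def by blast+
    have cont_\<psi>: "continuous_on UNIV \<psi>"
      using deriv_\<psi> by (meson continuous_at_imp_continuous_on has_derivative_continuous)
    have deriv_u\<psi>: "((\<lambda>x. u x * \<psi> x) has_derivative (\<lambda>v. (g x \<bullet> v) * \<psi> x + u x * D x v)) (at x)" for x
      by (rule has_derivative_eq_rhs[OF has_derivative_mult[OF deriv deriv_\<psi>]]) (simp add: algebra_simps)
    have cont_Du\<psi>: "continuous_on UNIV (\<lambda>x. (g x \<bullet> v) * \<psi> x + u x * D x v)" for v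
      by (intro continuous_intros cont_g cont_\<psi> cont_u cont_D)
    have "(LINT x:parallelogram p a b|lebesgue. (g x \<bullet> e) * \<psi> x + u x * D x e) = 0"
      using set_integral_parallelogram_derivative_eq_0[OF nondeg deriv_u\<psi> cont_Du\<psi>] supp by simp
    moreover have "set_integrable lebesgue (parallelogram p a b) (\<lambda>x. (g x \<bullet> e) * \<psi> x)"
      "set_integrable lebesgue (parallelogram p a b) (\<lambda>x. u x * D x e)"
      by (intro set_integrable_parallelogram[OF nondeg] continuous_intros cont_g cont_\<psi> cont_u cont_D)+
    ultimately show ?thesis
      by simp
  qed
  show ?thesis
    unfolding weak_gradient_H1_def
    by (intro conjI meas_u meas_g allI impI ballI parts set_integrable_parallelogram[OF nondeg]
        continuous_intros cont_u cont_g)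
qed

lemma set_integral_square_nonneg: "0 \<le> (LINT x:A|M. (f x :: real)\<^sup>2)"
  unfolding set_lebesgue_integral_def by (rule Bochner_Integration.integral_nonneg) (simp add: indicator_def)

lemma mu1_le_rayleigh_quotient:
  assumes "weak_gradient_H1 \<Omega> u g" "(LINT x:\<Omega>|lebesgue. u x) = 0" "(LINT x:\<Omega>|lebesgue. (u x)\<^sup>2) \<noteq> 0"
  shows "mu1 \<Omega> \<le> (LINT x:\<Omega>|lebesgue. (norm (g x))\<^sup>2) / (LINT x:\<Omega>|lebesgue. (u x)\<^sup>2)"
  unfolding mu1_def
proof (rule cInf_lower)
  show "(LINT x:\<Omega>|lebesgue. (norm (g x))\<^sup>2) / (LINT x:\<Omega>|lebesgue. (u x)\<^sup>2) \<in>
      {(LINT x:\<Omega>|lebesgue. (norm (g x))\<^sup>2) / (LINT x:\<Omega>|lebesgue. (u x)\<^sup>2) | u g.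
        weak_gradient_H1 \<Omega> u g \<and> (LINT x:\<Omega>|lebesgue. u x) = 0 \<and> (LINT x:\<Omega>|lebesgue. (u x)\<^sup>2) \<noteq> 0}"
    using assms by blast
qed (auto simp: bdd_below_def intro!: exI[of _ 0] divide_nonneg_nonneg set_integral_square_nonneg)

lemma has_integral_unit_interval_derivative:
  fixes F f :: "real \<Rightarrow> real"
  assumes "\<And>t. (F has_real_derivative f t) (at t)"
  shows "(f has_integral F 1 - F 0) {0..1}"
  using assms
  by (intro fundamental_theorem_of_calculus)
     (auto simp: has_real_derivative_iff_has_vector_derivative[symmetric] intro: has_field_derivative_at_within)


lemma has_derivative_ridge_sum:
  fixes f :: "real \<Rightarrow> real" and p w z :: "'a::real_inner"
  assumes deriv: "\<And>t. (f has_real_derivative f' t) (at t)"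
  shows "((\<lambda>x. \<alpha> * f ((x - p) \<bullet> w) + \<beta> * f ((x - p) \<bullet> z)) has_derivative
      (\<lambda>v. ((\<alpha> * f' ((x - p) \<bullet> w)) *\<^sub>R w + (\<beta> * f' ((x - p) \<bullet> z)) *\<^sub>R z) \<bullet> v)) (at x)"
proof -
  have "((\<lambda>x. (x - p) \<bullet> y) has_derivative (\<lambda>v. v \<bullet> y)) (at x)" for y
    by (auto intro!: derivative_eq_intros)
  then have ridge: "((\<lambda>x. f ((x - p) \<bullet> y)) has_derivative (\<lambda>v. (v \<bullet> y) * f' ((x - p) \<bullet> y))) (at x)" for y
    by (rule DERIV_compose_FDERIV[OF deriv])
  show ?thesis
    by (rule has_derivative_eq_rhs[OF has_derivative_add[OF
          has_derivative_mult_right[OF ridge] has_derivative_mult_right[OF ridge]]])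
       (simp add: inner_commute algebra_simps)
qed

lemma separable_test_function_parallelogram:
  fixes f f' :: "real \<Rightarrow> real"
  assumes nondeg: "cross2 a b \<noteq> 0"
    and deriv: "\<And>t. (f has_real_derivative f' t) (at t)" and cont: "continuous_on UNIV f'"
    and int_f: "(f has_integral 0) {0..1}"
    and int_f_sq: "((\<lambda>t. (f t)\<^sup>2) has_integral F2) {0..1}"
    and int_f'_sq: "((\<lambda>t. (f' t)\<^sup>2) has_integral G2) {0..1}"
  obtains u g where "weak_gradient_H1 (parallelogram p a b) u g"
    "(LINT x:parallelogram p a b|lebesgue. u x) = 0"
    "(LINT x:parallelogram p a b|lebesgue. (u x)\<^sup>2) = \<bar>cross2 a b\<bar> * ((\<alpha>\<^sup>2 + \<beta>\<^sup>2) * F2)"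
    "(LINT x:parallelogram p a b|lebesgue. (norm (g x))\<^sup>2) = \<bar>cross2 a b\<bar> *
       (((\<alpha>\<^sup>2 * (norm b)\<^sup>2 + \<beta>\<^sup>2 * (norm a)\<^sup>2) * G2 - 2 * \<alpha> * \<beta> * (a \<bullet> b) * (f 1 - f 0)\<^sup>2) / (cross2 a b)\<^sup>2)"
proof -
  \<comment> \<open>\<open>w\<close> and \<open>z\<close> form the basis dual to \<open>a\<close>, \<open>b\<close>, so \<open>(x - p) \<bullet> w\<close>, \<open>(x - p) \<bullet> z\<close> are the affine coordinates\<close>
  define w where "w = (1 / cross2 a b) *\<^sub>R perp b"
  define z where "z = (- 1 / cross2 a b) *\<^sub>R perp a"
  define u where "u x = \<alpha> * f ((x - p) \<bullet> w) + \<beta> * f ((x - p) \<bullet> z)" for x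
  define g where "g x = (\<alpha> * f' ((x - p) \<bullet> w)) *\<^sub>R w + (\<beta> * f' ((x - p) \<bullet> z)) *\<^sub>R z" for x
  have coords: "(p + s *\<^sub>R a + t *\<^sub>R b - p) \<bullet> w = s" "(p + s *\<^sub>R a + t *\<^sub>R b - p) \<bullet> z = t" for s t
    using reciprocal_basis_vec2(1,2)[OF nondeg, of s t] by (simp_all add: w_def z_def add.assoc)
  have deriv_u: "(u has_derivative (\<lambda>v. g x \<bullet> v)) (at x)" for x
    unfolding u_def g_def by (rule has_derivative_ridge_sum[OF deriv])
  have cont_u: "continuous_on UNIV u"
    using deriv_u by (meson continuous_at_imp_continuous_on has_derivative_continuous)
  have cont_g: "continuous_on UNIV g"
    unfolding g_def by (intro continuous_intros continuous_on_compose2[OF cont]) auto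
  have u_param: "u (p + s *\<^sub>R a + t *\<^sub>R b) = \<alpha> * f s + \<beta> * f t" for s t
    by (simp only: u_def coords)
  have g_param: "(norm (g (p + s *\<^sub>R a + t *\<^sub>R b)))\<^sup>2 =
      (\<alpha>\<^sup>2 * (norm b)\<^sup>2 / (cross2 a b)\<^sup>2) * (f' s)\<^sup>2
      + (- 2 * \<alpha> * \<beta> * (a \<bullet> b) / (cross2 a b)\<^sup>2 * f' s) * f' t
      + (\<beta>\<^sup>2 * (norm a)\<^sup>2 / (cross2 a b)\<^sup>2) * (f' t)\<^sup>2" for s t
  proof -
    have "w \<bullet> w = (norm b)\<^sup>2 / (cross2 a b)\<^sup>2" "z \<bullet> z = (norm a)\<^sup>2 / (cross2 a b)\<^sup>2"
      "w \<bullet> z = - (a \<bullet> b) / (cross2 a b)\<^sup>2"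
      unfolding w_def z_def by (rule reciprocal_basis_vec2[OF nondeg])+
    then show ?thesis
      unfolding power2_norm_eq_inner g_def coords
      by (simp add: inner_commute[of z w] power2_eq_square algebra_simps)
  qed
  have int_f': "(f' has_integral f 1 - f 0) {0..1}"
    by (rule has_integral_unit_interval_derivative[OF deriv])
  show thesis
  proof
    show "weak_gradient_H1 (parallelogram p a b) u g"
      by (rule weak_gradient_H1_parallelogram[OF nondeg deriv_u cont_g])
    show "(LINT x:parallelogram p a b|lebesgue. u x) = 0"
      using set_integral_parallelogram_separable[OF nondeg cont_u _ has_integral_mult_right[OF int_f, of \<alpha>]
          has_integral_0 has_integral_0 has_integral_mult_right[OF int_f, of \<beta>]]
      by (simp add: u_param)
    have "(u (p + s *\<^sub>R a + t *\<^sub>R b))\<^sup>2 = \<alpha>\<^sup>2 * (f s)\<^sup>2 + (2 * \<alpha> * \<beta> * f s) * f t + \<beta>\<^sup>2 * (f t)\<^sup>2" for s t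
      unfolding u_param by (simp add: power2_eq_square algebra_simps)
    from set_integral_parallelogram_separable[OF nondeg continuous_on_power[OF cont_u, of 2] this
        has_integral_mult_right[OF int_f_sq, of "\<alpha>\<^sup>2"] has_integral_mult_right[OF int_f, of "2 * \<alpha> * \<beta>"]
        int_f has_integral_mult_right[OF int_f_sq, of "\<beta>\<^sup>2"]]
    show "(LINT x:parallelogram p a b|lebesgue. (u x)\<^sup>2) = \<bar>cross2 a b\<bar> * ((\<alpha>\<^sup>2 + \<beta>\<^sup>2) * F2)"
      by (simp add: algebra_simps)
    show "(LINT x:parallelogram p a b|lebesgue. (norm (g x))\<^sup>2) = \<bar>cross2 a b\<bar> *
       (((\<alpha>\<^sup>2 * (norm b)\<^sup>2 + \<beta>\<^sup>2 * (norm a)\<^sup>2) * G2 - 2 * \<alpha> * \<beta> * (a \<bullet> b) * (f 1 - f 0)\<^sup>2) / (cross2 a b)\<^sup>2)"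
      using set_integral_parallelogram_separable[OF nondeg continuous_on_power[OF continuous_on_norm[OF cont_g], of 2] g_param
          has_integral_mult_right[OF int_f'_sq] has_integral_mult_right[OF int_f'] int_f'
          has_integral_mult_right[OF int_f'_sq]]
      by (simp add: power2_eq_square add_divide_distrib diff_divide_distrib algebra_simps)
  qed
qed

lemma mu1_parallelogram_le_separable:
  fixes f f' :: "real \<Rightarrow> real"
  assumes nondeg: "cross2 a b \<noteq> 0"
    and deriv: "\<And>t. (f has_real_derivative f' t) (at t)" and cont: "continuous_on UNIV f'"
    and int_f: "(f has_integral 0) {0..1}"
    and int_f_sq: "((\<lambda>t. (f t)\<^sup>2) has_integral F2) {0..1}" and F2: "F2 \<noteq> 0"
    and int_f'_sq: "((\<lambda>t. (f' t)\<^sup>2) has_integral G2) {0..1}"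
    and \<alpha>\<beta>: "\<alpha>\<^sup>2 + \<beta>\<^sup>2 \<noteq> 0"
  shows "mu1 (parallelogram p a b) \<le>
      ((\<alpha>\<^sup>2 * (norm b)\<^sup>2 + \<beta>\<^sup>2 * (norm a)\<^sup>2) * G2 - 2 * \<alpha> * \<beta> * (a \<bullet> b) * (f 1 - f 0)\<^sup>2)
        / ((cross2 a b)\<^sup>2 * ((\<alpha>\<^sup>2 + \<beta>\<^sup>2) * F2))"
proof -
  obtain u g where grad: "weak_gradient_H1 (parallelogram p a b) u g"
    and mean: "(LINT x:parallelogram p a b|lebesgue. u x) = 0"
    and u_sq: "(LINT x:parallelogram p a b|lebesgue. (u x)\<^sup>2) = \<bar>cross2 a b\<bar> * ((\<alpha>\<^sup>2 + \<beta>\<^sup>2) * F2)"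
    and g_sq: "(LINT x:parallelogram p a b|lebesgue. (norm (g x))\<^sup>2) = \<bar>cross2 a b\<bar> *
       (((\<alpha>\<^sup>2 * (norm b)\<^sup>2 + \<beta>\<^sup>2 * (norm a)\<^sup>2) * G2 - 2 * \<alpha> * \<beta> * (a \<bullet> b) * (f 1 - f 0)\<^sup>2) / (cross2 a b)\<^sup>2)"
    using separable_test_function_parallelogram[OF nondeg deriv cont int_f int_f_sq int_f'_sq] .
  have u_sq_nz: "(LINT x:parallelogram p a b|lebesgue. (u x)\<^sup>2) \<noteq> 0"
    using nondeg \<alpha>\<beta> F2 by (simp add: u_sq)
  show ?thesis
    using mu1_le_rayleigh_quotient[OF grad mean u_sq_nz] nondeg
    by (simp add: u_sq g_sq)
qed

lemma has_integral_cos_pi: "((\<lambda>t. cos (pi * t)) has_integral 0) {0..1}"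
proof -
  have "((\<lambda>t. sin (pi * t) / pi) has_real_derivative cos (pi * t)) (at t)" for t
    by (auto intro!: derivative_eq_intros)
  from has_integral_unit_interval_derivative[OF this] show ?thesis
    by simp
qed

lemma has_integral_cos_pi_sq: "((\<lambda>t. (cos (pi * t))\<^sup>2) has_integral 1 / 2) {0..1}"
proof -
  have "((\<lambda>t. t / 2 + sin (2 * (pi * t)) / (4 * pi)) has_real_derivative (cos (pi * t))\<^sup>2) (at t)" for t
  proof -
    have "((\<lambda>t. t / 2 + sin (2 * (pi * t)) / (4 * pi)) has_real_derivative 1 / 2 + cos (2 * (pi * t)) / 2) (at t)"
      by (auto intro!: derivative_eq_intros simp: field_simps)
    moreover have "1 / 2 + cos (2 * (pi * t)) / 2 = (cos (pi * t))\<^sup>2"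
      using cos_double_cos[of "pi * t"] by (simp add: field_simps)
    ultimately show ?thesis
      by simp
  qed
  from has_integral_unit_interval_derivative[OF this] show ?thesis
    by simp
qed

lemma has_integral_sin_pi_sq: "((\<lambda>t. (sin (pi * t))\<^sup>2) has_integral 1 / 2) {0..1}"
proof -
  have "((\<lambda>t. t / 2 - sin (2 * (pi * t)) / (4 * pi)) has_real_derivative (sin (pi * t))\<^sup>2) (at t)" for t
  proof -
    have "((\<lambda>t. t / 2 - sin (2 * (pi * t)) / (4 * pi)) has_real_derivative 1 / 2 - cos (2 * (pi * t)) / 2) (at t)"
      by (auto intro!: derivative_eq_intros simp: field_simps)
    moreover have "1 / 2 - cos (2 * (pi * t)) / 2 = (sin (pi * t))\<^sup>2"
      using cos_double_sin[of "pi * t"] by (simp add: field_simps)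
    ultimately show ?thesis
      by simp
  qed
  from has_integral_unit_interval_derivative[OF this] show ?thesis
    by simp
qed

lemma has_integral_shifted_linear: "((\<lambda>t. t - 1 / 2) has_integral 0) {0..1::real}"
proof -
  have "((\<lambda>t. t\<^sup>2 / 2 - t / 2) has_real_derivative t - 1 / 2) (at t)" for t :: real
    by (auto intro!: derivative_eq_intros)
  from has_integral_unit_interval_derivative[OF this] show ?thesis
    by simp
qed

lemma has_integral_shifted_linear_sq: "((\<lambda>t. (t - 1 / 2)\<^sup>2) has_integral 1 / 12) {0..1::real}"
proof -
  have "((\<lambda>t. (t - 1 / 2) ^ 3 / 3) has_real_derivative (t - 1 / 2)\<^sup>2) (at t)" for t :: real
    by (auto intro!: derivative_eq_intros simp: power2_eq_square)
  from has_integral_unit_interval_derivative[OF this] show ?thesis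
    by (simp add: power3_eq_cube)
qed

lemma mu1_parallelogram_le_cos:
  assumes nondeg: "cross2 a b \<noteq> 0" and \<alpha>\<beta>: "\<alpha>\<^sup>2 + \<beta>\<^sup>2 \<noteq> 0"
  shows "mu1 (parallelogram p a b) \<le>
    (pi\<^sup>2 * (\<alpha>\<^sup>2 * (norm b)\<^sup>2 + \<beta>\<^sup>2 * (norm a)\<^sup>2) - 16 * \<alpha> * \<beta> * (a \<bullet> b)) / ((cross2 a b)\<^sup>2 * (\<alpha>\<^sup>2 + \<beta>\<^sup>2))"
proof -
  have deriv: "((\<lambda>t. cos (pi * t)) has_real_derivative - (pi * sin (pi * t))) (at t)" for t
    by (auto intro!: derivative_eq_intros)
  have cont: "continuous_on UNIV (\<lambda>t. - (pi * sin (pi * t)))"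
    by (intro continuous_intros)
  have int_deriv_sq: "((\<lambda>t. (- (pi * sin (pi * t)))\<^sup>2) has_integral pi\<^sup>2 * (1 / 2)) {0..1}"
    using has_integral_mult_right[OF has_integral_sin_pi_sq, of "pi\<^sup>2"] by (simp add: power_mult_distrib)
  have "mu1 (parallelogram p a b) \<le> ((\<alpha>\<^sup>2 * (norm b)\<^sup>2 + \<beta>\<^sup>2 * (norm a)\<^sup>2) * (pi\<^sup>2 * (1 / 2))
      - 2 * \<alpha> * \<beta> * (a \<bullet> b) * (cos (pi * 1) - cos (pi * 0))\<^sup>2) / ((cross2 a b)\<^sup>2 * ((\<alpha>\<^sup>2 + \<beta>\<^sup>2) * (1 / 2)))"
    by (rule mu1_parallelogram_le_separable[OF nondeg deriv cont has_integral_cos_pi has_integral_cos_pi_sq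
          _ int_deriv_sq \<alpha>\<beta>]) simp
  also have "\<dots> = ((pi\<^sup>2 * (\<alpha>\<^sup>2 * (norm b)\<^sup>2 + \<beta>\<^sup>2 * (norm a)\<^sup>2) - 16 * \<alpha> * \<beta> * (a \<bullet> b)) * (1 / 2))
      / (((cross2 a b)\<^sup>2 * (\<alpha>\<^sup>2 + \<beta>\<^sup>2)) * (1 / 2))"
    by (rule arg_cong2[where f = "(/)"]) (simp_all add: algebra_simps)
  also have "\<dots> = (pi\<^sup>2 * (\<alpha>\<^sup>2 * (norm b)\<^sup>2 + \<beta>\<^sup>2 * (norm a)\<^sup>2) - 16 * \<alpha> * \<beta> * (a \<bullet> b))
      / ((cross2 a b)\<^sup>2 * (\<alpha>\<^sup>2 + \<beta>\<^sup>2))"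
    by (rule mult_divide_mult_cancel_right) simp
  finally show ?thesis .
qed

lemma mu1_parallelogram_le_linear:
  assumes nondeg: "cross2 a b \<noteq> 0" and \<alpha>\<beta>: "\<alpha>\<^sup>2 + \<beta>\<^sup>2 \<noteq> 0"
  shows "mu1 (parallelogram p a b) \<le>
    12 * (\<alpha>\<^sup>2 * (norm b)\<^sup>2 + \<beta>\<^sup>2 * (norm a)\<^sup>2 - 2 * \<alpha> * \<beta> * (a \<bullet> b)) / ((cross2 a b)\<^sup>2 * (\<alpha>\<^sup>2 + \<beta>\<^sup>2))"
proof -
  have deriv: "((\<lambda>t. t - 1 / 2) has_real_derivative 1) (at t)" for t :: real
    by (auto intro!: derivative_eq_intros)
  have "mu1 (parallelogram p a b) \<le> ((\<alpha>\<^sup>2 * (norm b)\<^sup>2 + \<beta>\<^sup>2 * (norm a)\<^sup>2) * 1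
      - 2 * \<alpha> * \<beta> * (a \<bullet> b) * ((1 - 1 / 2) - (0 - 1 / 2))\<^sup>2) / ((cross2 a b)\<^sup>2 * ((\<alpha>\<^sup>2 + \<beta>\<^sup>2) * (1 / 12)))"
    by (rule mu1_parallelogram_le_separable[OF nondeg deriv _ has_integral_shifted_linear
          has_integral_shifted_linear_sq _ _ \<alpha>\<beta>]) (simp_all add: has_integral_const_real[of 1 0 1, simplified])
  also have "\<dots> = (12 * (\<alpha>\<^sup>2 * (norm b)\<^sup>2 + \<beta>\<^sup>2 * (norm a)\<^sup>2 - 2 * \<alpha> * \<beta> * (a \<bullet> b)) * (1 / 12))
      / (((cross2 a b)\<^sup>2 * (\<alpha>\<^sup>2 + \<beta>\<^sup>2)) * (1 / 12))"
    by (rule arg_cong2[where f = "(/)"]) (simp_all add: algebra_simps)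
  also have "\<dots> = 12 * (\<alpha>\<^sup>2 * (norm b)\<^sup>2 + \<beta>\<^sup>2 * (norm a)\<^sup>2 - 2 * \<alpha> * \<beta> * (a \<bullet> b))
      / ((cross2 a b)\<^sup>2 * (\<alpha>\<^sup>2 + \<beta>\<^sup>2))"
    by (rule mult_divide_mult_cancel_right) simp
  finally show ?thesis .
qed

lemma mu1_parallelogram_cos_bound:
  assumes nondeg: "cross2 a b \<noteq> 0"
  shows "mu1 (parallelogram p a b) * ((norm a)\<^sup>2 * (norm b)\<^sup>2 - (a \<bullet> b)\<^sup>2) \<le> pi\<^sup>2 * (norm a)\<^sup>2"
  using mu1_parallelogram_le_cos[OF nondeg, of 0 1 p] nondeg
  by (simp add: cross2_sq[symmetric] pos_le_divide_eq)

lemma mu1_parallelogram_mixed_bound: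
  assumes nondeg: "cross2 a b \<noteq> 0"
  shows "2 * mu1 (parallelogram p a b) * ((norm a)\<^sup>2 * (norm b)\<^sup>2 - (a \<bullet> b)\<^sup>2)
    \<le> pi\<^sup>2 * ((norm a)\<^sup>2 + (norm b)\<^sup>2) - 16 * \<bar>a \<bullet> b\<bar>"
proof -
  define \<sigma> :: real where "\<sigma> = (if 0 \<le> a \<bullet> b then 1 else -1)"
  have "\<sigma>\<^sup>2 = 1" "\<sigma> * (a \<bullet> b) = \<bar>a \<bullet> b\<bar>"
    by (simp_all add: \<sigma>_def)
  then have "mu1 (parallelogram p a b) \<le>
      (pi\<^sup>2 * ((norm b)\<^sup>2 + (norm a)\<^sup>2) - 16 * \<bar>a \<bullet> b\<bar>) / ((cross2 a b)\<^sup>2 * 2)"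
    using mu1_parallelogram_le_cos[OF nondeg, of 1 \<sigma> p] by (simp add: mult.assoc)
  then show ?thesis
    using nondeg by (simp add: cross2_sq[symmetric] pos_le_divide_eq algebra_simps)
qed

lemma mu1_parallelogram_linear_bound:
  assumes nondeg: "cross2 a b \<noteq> 0"
  shows "mu1 (parallelogram p a b) * ((a \<bullet> b)\<^sup>2 + (norm b) ^ 4) \<le> 12 * (norm b)\<^sup>2"
proof -
  define c where "c = a \<bullet> b"
  have pos: "0 < c\<^sup>2 + ((norm b)\<^sup>2)\<^sup>2"
    using nondeg by (intro add_nonneg_pos) auto
  have "c\<^sup>2 * (norm b)\<^sup>2 + ((norm b)\<^sup>2)\<^sup>2 * (norm a)\<^sup>2 - 2 * c * (norm b)\<^sup>2 * c = (norm b)\<^sup>2 * (cross2 a b)\<^sup>2"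
    unfolding cross2_sq c_def by (simp add: power2_eq_square algebra_simps)
  then have "mu1 (parallelogram p a b) \<le> (12 * (norm b)\<^sup>2) * (cross2 a b)\<^sup>2 / ((c\<^sup>2 + ((norm b)\<^sup>2)\<^sup>2) * (cross2 a b)\<^sup>2)"
    using mu1_parallelogram_le_linear[OF nondeg, of c "(norm b)\<^sup>2" p] pos
    by (simp add: c_def mult_ac)
  also have "\<dots> = 12 * (norm b)\<^sup>2 / (c\<^sup>2 + ((norm b)\<^sup>2)\<^sup>2)"
    using nondeg by simp
  finally show ?thesis
    using pos by (simp add: c_def pos_le_divide_eq power_mult[symmetric])
qed

section \<open>The scalar inequality\<close>

lemma pi_sq_bounds: "197 / 20 < pi\<^sup>2" "pi\<^sup>2 < 987 / 100"
proof -
  have "3.14 < pi" "pi < 3.1416"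
    using pi_approx by auto
  then have "3.14\<^sup>2 < pi\<^sup>2" "pi\<^sup>2 < 3.1416\<^sup>2"
    by (auto intro!: power_strict_mono)
  then show "197 / 20 < pi\<^sup>2" "pi\<^sup>2 < 987 / 100"
    by (simp_all add: power2_eq_square)
qed

lemma near_square_poly_estimate_interval:
  fixes k Q k0 k1 :: real
  assumes "1 \<le> k0" "k0 \<le> k" "k \<le> k1" "0 < Q" "Q < 9.87"
    and endpoints: "9.87 * k1^4 * (k1\<^sup>2 + 4 * k1 + 1) / 8 + 4 * 9.87 * k1\<^sup>2 \<le> 16 * k0 * (1 + k0)\<^sup>2"
  shows "Q * k^4 * (k\<^sup>2 + 4 * k + 1) / 8 + 4 * Q * k\<^sup>2 \<le> 16 * k * (1 + k)\<^sup>2"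
proof -
  have k4: "k^4 \<le> k1^4" and k2: "k\<^sup>2 \<le> k1\<^sup>2"
    using assms by (intro power_mono; simp)+
  have "Q * k^4 \<le> 9.87 * k1^4"
    using assms k4 by (intro mult_mono) auto
  moreover have "k\<^sup>2 + 4 * k + 1 \<le> k1\<^sup>2 + 4 * k1 + 1"
    using k2 assms by linarith
  ultimately have "Q * k^4 * (k\<^sup>2 + 4 * k + 1) / 8 \<le> 9.87 * k1^4 * (k1\<^sup>2 + 4 * k1 + 1) / 8"
    using assms by (intro divide_right_mono mult_mono) auto
  moreover have "4 * Q * k\<^sup>2 \<le> 4 * 9.87 * k1\<^sup>2"
    using assms k2 by (intro mult_mono) auto
  moreover have "16 * k0 * (1 + k0)\<^sup>2 \<le> 16 * k * (1 + k)\<^sup>2"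
    using assms by (intro mult_mono power_mono) auto
  ultimately show ?thesis
    using endpoints by linarith
qed

lemma near_square_poly_estimate:
  fixes k Q :: real
  assumes "1 \<le> k" "k < 1.24" "0 < Q" "Q < 9.87"
  shows "Q * k^4 * (k\<^sup>2 + 4 * k + 1) / 8 + 4 * Q * k\<^sup>2 \<le> 16 * k * (1 + k)\<^sup>2"
proof -
  consider "k \<le> 1.1" | "1.1 \<le> k" "k \<le> 1.17" | "1.17 \<le> k"
    by linarith
  then show ?thesis
  proof cases
    case 1
    then show ?thesis
      using assms by (intro near_square_poly_estimate_interval[of 1 k "1.1" Q]) (auto simp: power_divide)
  next
    case 2
    then show ?thesis
      using assms by (intro near_square_poly_estimate_interval[of "1.1" k "1.17" Q]) (auto simp: power_divide)
  next
    case 3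
    then show ?thesis
      using assms by (intro near_square_poly_estimate_interval[of "1.17" k "1.24" Q]) (auto simp: power_divide)
  qed
qed

lemma linear_test_failure_bounds:
  fixes k g Q :: real
  assumes k: "1 \<le> k" and Q: "197 / 20 < Q"
    and linear_test_fails: "Q * (g\<^sup>2 + k\<^sup>2) < 3 * (1 + k)\<^sup>2"
  shows "g\<^sup>2 < (1 / 2)\<^sup>2" "k < 1.24"
proof -
  have Qk: "197 / 20 * k\<^sup>2 \<le> Q * k\<^sup>2" and Qg: "197 / 20 * g\<^sup>2 \<le> Q * g\<^sup>2"
    using Q by (intro mult_right_mono; simp)+
  have expand: "3 * (1 + k)\<^sup>2 = 3 + 6 * k + 3 * k\<^sup>2" "Q * (g\<^sup>2 + k\<^sup>2) = Q * g\<^sup>2 + Q * k\<^sup>2"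
    by (simp_all add: algebra_simps power2_eq_square)
  have "0 \<le> (k - 1) * (137 / 20 * k + 17 / 20)"
    using k by simp
  moreover have "(k - 1) * (137 / 20 * k + 17 / 20) = 137 / 20 * k\<^sup>2 - 6 * k - 17 / 20"
    by (simp add: field_simps power2_eq_square)
  ultimately show "g\<^sup>2 < (1 / 2)\<^sup>2"
    using Qk Qg expand linear_test_fails by (simp add: power_divide)
  show "k < 1.24"
  proof (rule ccontr)
    assume "\<not> k < 1.24"
    then have "0 \<le> (k - 31 / 25) * (137 / 20 * k + 1247 / 500)"
      by simp
    moreover have "(k - 31 / 25) * (137 / 20 * k + 1247 / 500) = 137 / 20 * k\<^sup>2 - 6 * k - 38657 / 12500"
      by (simp add: field_simps power2_eq_square)
    moreover have "0 \<le> Q * g\<^sup>2"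
      using Q by simp
    ultimately show False
      using Qk expand linear_test_fails by linarith
  qed
qed

lemma mixed_test_estimate:
  fixes k g Q :: real
  assumes k: "1 \<le> k" and g: "0 \<le> g" and Q: "197 / 20 < Q" "Q < 987 / 100"
    and cos_test_fails: "(3 * k + 1) * (k - 1) < 4 * k\<^sup>2 * g\<^sup>2"
    and linear_test_fails: "Q * (g\<^sup>2 + k\<^sup>2) < 3 * (1 + k)\<^sup>2"
  shows "(1 + k)\<^sup>2 * (Q * (1 + k\<^sup>2) - 16 * k * g) \<le> 8 * Q * k\<^sup>2 * (1 - g\<^sup>2)"
proof -
  have g_half: "g \<le> 1 / 2"
    using linear_test_failure_bounds(1)[OF k Q(1) linear_test_fails] by (auto dest: power_less_imp_less_base)
  have "4 * (k - 1) \<le> (3 * k + 1) * (k - 1)"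
    using k by (intro mult_right_mono) auto
  then have "k - 1 \<le> k\<^sup>2 * g\<^sup>2"
    using cos_test_fails by simp
  then have "(k - 1)\<^sup>2 \<le> (k\<^sup>2 * g\<^sup>2)\<^sup>2"
    using k by (intro power_mono) auto
  also have "\<dots> = k ^ 4 * (g * g ^ 3)"
    by (simp add: power_mult_distrib power_mult[symmetric] power_numeral_reduce)
  also have "\<dots> \<le> k ^ 4 * (g * (1 / 2) ^ 3)"
    using g g_half by (intro mult_left_mono power_mono) auto
  finally have T1: "Q * (k - 1)\<^sup>2 * (k\<^sup>2 + 4 * k + 1) \<le> Q * (k ^ 4 * (g / 8)) * (k\<^sup>2 + 4 * k + 1)"
    using Q k by (intro mult_right_mono mult_left_mono) (auto simp: power_divide)
  have "g\<^sup>2 \<le> g / 2"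
    using g g_half by (simp add: power2_eq_square mult_left_mono[of g "1 / 2" g, simplified])
  then have T2: "8 * Q * k\<^sup>2 * g\<^sup>2 \<le> 8 * Q * k\<^sup>2 * (g / 2)"
    using Q by (intro mult_left_mono) auto
  have "(Q * k ^ 4 * (k\<^sup>2 + 4 * k + 1) / 8 + 4 * Q * k\<^sup>2) * g \<le> (16 * k * (1 + k)\<^sup>2) * g"
    using near_square_poly_estimate[OF k linear_test_failure_bounds(2)[OF k Q(1) linear_test_fails]] Q g
    by (intro mult_right_mono) auto
  moreover have "8 * Q * k\<^sup>2 * (1 - g\<^sup>2) - (1 + k)\<^sup>2 * (Q * (1 + k\<^sup>2) - 16 * k * g)
      = 16 * k * (1 + k)\<^sup>2 * g - Q * (k - 1)\<^sup>2 * (k\<^sup>2 + 4 * k + 1) - 8 * Q * k\<^sup>2 * g\<^sup>2"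
    by (simp add: algebra_simps power2_eq_square power_numeral_reduce)
  moreover have "Q * (k ^ 4 * (g / 8)) * (k\<^sup>2 + 4 * k + 1) + 8 * Q * k\<^sup>2 * (g / 2)
      = (Q * k ^ 4 * (k\<^sup>2 + 4 * k + 1) / 8 + 4 * Q * k\<^sup>2) * g"
    by (simp add: algebra_simps)
  ultimately show ?thesis
    using T1 T2 by linarith
qed

lemma normalized_eigenvalue_estimate:
  fixes k g m Q :: real
  assumes k: "1 \<le> k" and g: "0 \<le> g" "g < 1" and m: "0 \<le> m" and Q: "197 / 20 < Q" "Q < 987 / 100"
    and cos_test: "m * (k\<^sup>2 * (1 - g\<^sup>2)) \<le> Q"
    and mixed_test: "2 * m * (k\<^sup>2 * (1 - g\<^sup>2)) \<le> Q * (1 + k\<^sup>2) - 16 * k * g"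
    and linear_test: "m * (g\<^sup>2 + k\<^sup>2) \<le> 12"
  shows "(1 + k)\<^sup>2 * m \<le> 4 * Q"
proof -
  have D: "0 < k\<^sup>2 * (1 - g\<^sup>2)"
    using k g by (simp add: power_less_one_iff abs_less_iff)
  consider "(1 + k)\<^sup>2 \<le> 4 * (k\<^sup>2 * (1 - g\<^sup>2))" | "3 * (1 + k)\<^sup>2 \<le> Q * (g\<^sup>2 + k\<^sup>2)"
    | "4 * (k\<^sup>2 * (1 - g\<^sup>2)) < (1 + k)\<^sup>2" "Q * (g\<^sup>2 + k\<^sup>2) < 3 * (1 + k)\<^sup>2"
    by linarith
  then show ?thesis
  proof cases
    case 1
    then have "(1 + k)\<^sup>2 * m \<le> 4 * (k\<^sup>2 * (1 - g\<^sup>2)) * m"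
      using m by (rule mult_right_mono)
    then show ?thesis
      using cos_test by (simp add: mult_ac)
  next
    case 2
    then have "3 * (1 + k)\<^sup>2 * m \<le> Q * (g\<^sup>2 + k\<^sup>2) * m"
      using m by (rule mult_right_mono)
    also have "\<dots> = Q * (m * (g\<^sup>2 + k\<^sup>2))"
      by (simp add: mult_ac)
    also have "\<dots> \<le> Q * 12"
      using linear_test Q by (intro mult_left_mono) auto
    finally show ?thesis
      by (simp add: mult.commute)
  next
    case 3
    have "(3 * k + 1) * (k - 1) < 4 * k\<^sup>2 * g\<^sup>2"
      using 3(1) by (simp add: algebra_simps power2_eq_square)
    from mixed_test_estimate[OF k g(1) Q this 3(2)]
    have "(1 + k)\<^sup>2 * (2 * m * (k\<^sup>2 * (1 - g\<^sup>2))) \<le> 8 * Q * k\<^sup>2 * (1 - g\<^sup>2)"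
      using mixed_test by (meson mult_left_mono order_trans zero_le_power2)
    then have "((1 + k)\<^sup>2 * m) * (2 * (k\<^sup>2 * (1 - g\<^sup>2))) \<le> (4 * Q) * (2 * (k\<^sup>2 * (1 - g\<^sup>2)))"
      by (simp add: algebra_simps)
    then show ?thesis
      using D by (elim mult_right_le_imp_le) simp
  qed
qed

lemma eigenvalue_estimate:
  fixes x y c M :: real
  assumes x: "0 < x" and xy: "x \<le> y" and c: "c\<^sup>2 < x\<^sup>2 * y\<^sup>2" and M: "0 \<le> M"
    and cos_test: "M * (x\<^sup>2 * y\<^sup>2 - c\<^sup>2) \<le> pi\<^sup>2 * x\<^sup>2"
    and mixed_test: "2 * M * (x\<^sup>2 * y\<^sup>2 - c\<^sup>2) \<le> pi\<^sup>2 * (x\<^sup>2 + y\<^sup>2) - 16 * \<bar>c\<bar>"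
    and linear_test: "M * (c\<^sup>2 + y ^ 4) \<le> 12 * y\<^sup>2"
  shows "(x + y)\<^sup>2 * M \<le> 4 * pi\<^sup>2"
proof -
  define k where "k = y / x"
  define g where "g = \<bar>c\<bar> / (x * y)"
  define m where "m = M * x\<^sup>2"
  have y: "0 < y"
    using x xy by simp
  have y_eq: "y = k * x" and abs_c: "\<bar>c\<bar> = g * k * x\<^sup>2"
    using x y by (simp_all add: k_def g_def field_simps power2_eq_square)
  have c_sq: "c\<^sup>2 = (g * k * x\<^sup>2)\<^sup>2"
    using abs_c by (metis power2_abs)
  have x2: "0 < x\<^sup>2"
    using x by simp
  have k: "1 \<le> k"
    using x xy by (simp add: k_def)
  have g: "0 \<le> g" "g < 1"
  proof -
    show "0 \<le> g"
      using x y by (simp add: g_def)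
    have "\<bar>c\<bar>\<^sup>2 < (x * y)\<^sup>2"
      using c by (simp add: power_mult_distrib)
    then have "\<bar>c\<bar> < x * y"
      by (rule power_less_imp_less_base) (use x y in simp)
    then show "g < 1"
      using x y by (simp add: g_def)
  qed
  have "x\<^sup>2 * (m * (k\<^sup>2 * (1 - g\<^sup>2))) \<le> x\<^sup>2 * pi\<^sup>2"
    using cos_test unfolding y_eq c_sq m_def by (simp add: power2_eq_square algebra_simps)
  then have cos': "m * (k\<^sup>2 * (1 - g\<^sup>2)) \<le> pi\<^sup>2"
    using x2 by simp
  have "x\<^sup>2 * (2 * m * (k\<^sup>2 * (1 - g\<^sup>2))) \<le> x\<^sup>2 * (pi\<^sup>2 * (1 + k\<^sup>2) - 16 * k * g)"
    using mixed_test unfolding y_eq c_sq abs_c m_def by (simp add: power2_eq_square algebra_simps)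
  then have mixed': "2 * m * (k\<^sup>2 * (1 - g\<^sup>2)) \<le> pi\<^sup>2 * (1 + k\<^sup>2) - 16 * k * g"
    using x2 by simp
  have "(x\<^sup>2 * k\<^sup>2) * (m * (g\<^sup>2 + k\<^sup>2)) \<le> (x\<^sup>2 * k\<^sup>2) * 12"
    using linear_test unfolding y_eq c_sq m_def by (simp add: power2_eq_square power4_eq_xxxx algebra_simps)
  then have linear': "m * (g\<^sup>2 + k\<^sup>2) \<le> 12"
    using x2 k by simp
  have "(1 + k)\<^sup>2 * m \<le> 4 * pi\<^sup>2"
    using normalized_eigenvalue_estimate[OF k g _ pi_sq_bounds cos' mixed' linear'] M by (simp add: m_def)
  then show ?thesis
    using x by (simp add: y_eq m_def power2_eq_square algebra_simps)
qed

lemma perimeter_sq_mult_mu1_parallelogram_le: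
  assumes nondeg: "cross2 a b \<noteq> 0" and shorter: "norm a \<le> norm b"
  shows "(perimeter (parallelogram p a b))\<^sup>2 * mu1 (parallelogram p a b) \<le> 16 * pi\<^sup>2"
proof (cases "mu1 (parallelogram p a b) < 0")
  case True
  then have "(perimeter (parallelogram p a b))\<^sup>2 * mu1 (parallelogram p a b) \<le> 0"
    by (intro mult_nonneg_nonpos) auto
  then show ?thesis
    by (rule order_trans) simp
next
  case False
  have "0 < (cross2 a b)\<^sup>2"
    using nondeg by simp
  then have "(a \<bullet> b)\<^sup>2 < (norm a)\<^sup>2 * (norm b)\<^sup>2"
    by (simp add: cross2_sq)
  moreover have "0 < norm a"
    using nondeg by auto
  ultimately have estimate: "(norm a + norm b)\<^sup>2 * mu1 (parallelogram p a b) \<le> 4 * pi\<^sup>2"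
    using eigenvalue_estimate[OF _ shorter _ _ mu1_parallelogram_cos_bound[OF nondeg]
        mu1_parallelogram_mixed_bound[OF nondeg] mu1_parallelogram_linear_bound[OF nondeg]] False
    by simp
  have "(perimeter (parallelogram p a b))\<^sup>2 \<le> (2 * (norm a + norm b))\<^sup>2"
    using perimeter_parallelogram_bounds[OF nondeg, of p] by (intro power_mono) auto
  then have "(perimeter (parallelogram p a b))\<^sup>2 * mu1 (parallelogram p a b)
      \<le> (2 * (norm a + norm b))\<^sup>2 * mu1 (parallelogram p a b)"
    using False by (intro mult_right_mono) auto
  also have "\<dots> = 4 * ((norm a + norm b)\<^sup>2 * mu1 (parallelogram p a b))"
    by (simp add: power2_eq_square algebra_simps)
  also have "\<dots> \<le> 16 * pi\<^sup>2"
    using estimate by linarith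
  finally show ?thesis .
qed

theorem mainTheorem9:
  fixes \<Omega> :: "(real^2) set"
  assumes "is_parallelogram \<Omega>"
  shows "perimeter \<Omega> * min_width \<Omega> \<le> 4 * area \<Omega> \<and>
         (perimeter \<Omega>)\<^sup>2 * mu1 \<Omega> \<le> 16 * pi\<^sup>2"
proof -
  obtain p a b where nondeg: "cross2 a b \<noteq> 0" and \<Omega>: "\<Omega> = parallelogram p a b"
    using assms unfolding is_parallelogram_iff by blast
  have "(perimeter \<Omega>)\<^sup>2 * mu1 \<Omega> \<le> 16 * pi\<^sup>2"
  proof (cases "norm a \<le> norm b")
    case True
    then show ?thesis
      using perimeter_sq_mult_mu1_parallelogram_le[OF nondeg] \<Omega> by simp
  next
    case False
    then show ?thesis
      using perimeter_sq_mult_mu1_parallelogram_le[OF cross2_commute_nonzero[OF nondeg], of p] \<Omega>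
      by (simp add: parallelogram_commute[of p a b])
  qed
  then show ?thesis
    using perimeter_mult_min_width_parallelogram_le[OF nondeg, of p] \<Omega> by simp
qed

end
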